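(* Let $\alpha\in\{1/2,-1/2\}$, $\nu_1>0$ and $x'>0$ be fixed, let $s=s(N)\in\mathbb Z_{\ge0}$ satisfy $s\sim N^{1/4}\nu_1$, and let $x=N^{-1/2}x'-1$ (which lies in $[-1,1]$ for large $N$). Then as $N\to\infty$, $$N^{-1/4}(-1)^sJ_{s,\alpha}(x)\sim\frac{\sin[\nu_1\sqrt{2x'}]}{2^\alpha\sqrt{x'}}.$$
   Context: $J_{k,1/2}$ and $J_{k,-1/2}$ ($k\ge0$) are defined by $J_{0,1/2}=1$, $J_{1,1/2}(x)=2x$, $J_{0,-1/2}=1$, $J_{1,-1/2}(x)=2x-1$, both satisfying $xp_k(x)=\frac12p_{k+1}(x)+\frac12p_{k-1}(x)$ for $k\ge1$; equivalently $J_{k,1/2}(\cos\theta)=\frac{\sin((k+1)\theta)}{\sin\theta}$ and $J_{k,-1/2}(\cos\theta)=\frac{\cos((k+1/2)\theta)}{\cos(\theta/2)}$. *)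

theory Defs
  imports "HOL-Analysis.Analysis" "HOL-Library.Landau_Symbols"
begin

text \<open>The polynomials J_{k,alpha} for alpha in {1/2, -1/2}:
  J_0 = 1, J_1 = 2x (alpha = 1/2) resp. 2x - 1 (alpha = -1/2), i.e. J_1 = 2x + alpha - 1/2,
  and x J_k = (J_{k+1} + J_{k-1})/2, i.e. J_{k+1} = 2x J_k - J_{k-1}.\<close>
fun Jpoly :: "real \<Rightarrow> nat \<Rightarrow> real \<Rightarrow> real" where
  "Jpoly \<alpha> 0 x = 1"
| "Jpoly \<alpha> (Suc 0) x = 2 * x + \<alpha> - 1/2"
| "Jpoly \<alpha> (Suc (Suc k)) x = 2 * x * Jpoly \<alpha> (Suc k) x - Jpoly \<alpha> k x"

end

theory Submission
  imports Defs
begin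

text \<open>Substituting \<open>x = -cos \<phi>\<close> turns the recurrence into the addition formula for the sine:
  \<open>(-1)^k J\<^sub>k\<^sub>,\<^sub>\<alpha>(-cos \<phi>) sin (a\<phi>) = sin ((k + a)\<phi>)\<close> with \<open>a = 2 powr (\<alpha> - 1/2)\<close>.
  For \<open>x = N^(-1/2) x' - 1\<close> the angle is \<open>\<phi> = 2 arcsin (sqrt (x'/2) N^(-1/4)) \<sim> sqrt (2x') N^(-1/4)\<close>,
  so \<open>s\<phi> \<rightarrow> \<nu>\<^sub>1 sqrt (2x')\<close> while \<open>N^(1/4) sin (a\<phi>) \<rightarrow> a sqrt (2x') = 2 powr \<alpha> sqrt x'\<close>.\<close>

lemma Jpoly_neg_cos_mult_sin:
  assumes init0: "Jpoly \<alpha> 0 (- cos p) * sin (a * p) = sin (a * p)"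
      and init1: "- Jpoly \<alpha> 1 (- cos p) * sin (a * p) = sin ((1 + a) * p)"
  shows "(-1) ^ k * Jpoly \<alpha> k (- cos p) * sin (a * p) = sin ((real k + a) * p)"
proof (induction k rule: induct_nat_012)
  case (ge2 k)
  have "sin ((real (Suc (Suc k)) + a) * p)
      = 2 * cos p * sin ((real (Suc k) + a) * p) - sin ((real k + a) * p)"
  proof -
    have "(real (Suc (Suc k)) + a) * p = (real (Suc k) + a) * p + p"
      and "(real k + a) * p = (real (Suc k) + a) * p - p"
      by (simp_all add: algebra_simps)
    then show ?thesis by (simp only: sin_add sin_diff) (simp add: algebra_simps)
  qed
  also have "\<dots> = 2 * cos p * ((-1) ^ Suc k * Jpoly \<alpha> (Suc k) (- cos p) * sin (a * p))
      - (-1) ^ k * Jpoly \<alpha> k (- cos p) * sin (a * p)"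
    using ge2 by simp
  also have "\<dots> = (-1) ^ Suc (Suc k) * Jpoly \<alpha> (Suc (Suc k)) (- cos p) * sin (a * p)"
    by (simp add: algebra_simps)
  finally show ?case by simp
qed (use init0 init1 in simp_all)

lemma Jpoly_neg_cos:
  assumes "\<alpha> \<in> {1/2, -1/2}"
  shows "(-1) ^ k * Jpoly \<alpha> k (- cos p) * sin (2 powr (\<alpha> - 1/2) * p)
       = sin ((real k + 2 powr (\<alpha> - 1/2)) * p)"
  using assms
proof
  assume \<alpha>: "\<alpha> = 1/2"
  show ?thesis
    unfolding \<alpha> using Jpoly_neg_cos_mult_sin[of "1/2" p 1 k] by (simp add: sin_double)
next
  assume "\<alpha> \<in> {-1/2}"
  then have \<alpha>: "\<alpha> = -1/2" by simp
  have "sin ((1 + 1/2) * p) = sin (p/2 + p)" by (simp add: algebra_simps)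
  also have "\<dots> = sin (p/2) * (2 * cos p + 1)"
  proof -
    have cos_p: "cos p = 2 * cos (p/2)^2 - 1" using cos_double_cos[of "p/2"] by simp
    have sin_p: "sin p = 2 * sin (p/2) * cos (p/2)" using sin_double[of "p/2"] by simp
    show ?thesis unfolding sin_add cos_p sin_p by (simp add: algebra_simps power2_eq_square)
  qed
  finally have "sin ((1 + 1/2) * p) = sin (p/2) * (2 * cos p + 1)" .
  moreover have "2 powr (- 1/2 - 1/2) = (1/2 :: real)" by (simp add: powr_minus_divide)
  ultimately show ?thesis
    unfolding \<alpha> by (simp only:) (intro Jpoly_neg_cos_mult_sin; simp add: algebra_simps)
qed

lemma tendsto_scaled_comp_tangent_id:
  fixes f :: "real \<Rightarrow> real"
  assumes f: "(f has_field_derivative 1) (at 0)" "f 0 = 0"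
      and u: "filterlim u (at 0) F"
      and ru: "((\<lambda>x. r x * u x) \<longlongrightarrow> L) F"
  shows "((\<lambda>x. r x * f (u x)) \<longlongrightarrow> L) F"
proof -
  have "((\<lambda>y. f y / y) \<longlongrightarrow> 1) (at 0)"
    using f unfolding has_field_derivative_iff by simp
  then have "((\<lambda>x. f (u x) / u x * (r x * u x)) \<longlongrightarrow> 1 * L) F"
    by (intro tendsto_mult ru filterlim_compose[OF _ u, unfolded o_def])
  moreover have "eventually (\<lambda>x. u x \<noteq> 0) F"
    using u by (simp add: filterlim_at)
  then have "eventually (\<lambda>x. f (u x) / u x * (r x * u x) = r x * f (u x)) F"
    by eventually_elim simp
  ultimately show ?thesis by (simp add: tendsto_cong)
qed

lemma tendsto_zero_if_ratio_tendsto: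
  fixes \<epsilon> \<phi> :: "'a \<Rightarrow> real"
  assumes "(\<epsilon> \<longlongrightarrow> 0) F" "eventually (\<lambda>x. \<epsilon> x \<noteq> 0) F" "((\<lambda>x. \<phi> x / \<epsilon> x) \<longlongrightarrow> L) F"
  shows "(\<phi> \<longlongrightarrow> 0) F"
proof -
  have "((\<lambda>x. \<epsilon> x * (\<phi> x / \<epsilon> x)) \<longlongrightarrow> 0 * L) F"
    by (intro tendsto_mult assms(1,3))
  moreover have "eventually (\<lambda>x. \<epsilon> x * (\<phi> x / \<epsilon> x) = \<phi> x) F"
    using assms(2) by eventually_elim simp
  ultimately show ?thesis by (simp add: tendsto_cong)
qed

lemma tendsto_sin_div_scale:
  fixes \<epsilon> \<phi> :: "'a \<Rightarrow> real"
  assumes \<epsilon>: "(\<epsilon> \<longlongrightarrow> 0) F" "eventually (\<lambda>x. \<epsilon> x \<noteq> 0) F"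
      and \<phi>: "((\<lambda>x. \<phi> x / \<epsilon> x) \<longlongrightarrow> L) F" "eventually (\<lambda>x. a * \<phi> x \<noteq> 0) F"
  shows "((\<lambda>x. sin (a * \<phi> x) / \<epsilon> x) \<longlongrightarrow> a * L) F"
proof -
  have "((\<lambda>x. a * \<phi> x) \<longlongrightarrow> 0) F"
    using tendsto_mult_right_zero[OF tendsto_zero_if_ratio_tendsto[OF \<epsilon> \<phi>(1)]] by simp
  with \<phi>(2) have a\<phi>_at0: "filterlim (\<lambda>x. a * \<phi> x) (at 0) F"
    by (rule filterlim_atI[rotated])
  have "((\<lambda>x. a * (\<phi> x / \<epsilon> x)) \<longlongrightarrow> a * L) F"
    by (intro tendsto_mult_left \<phi>(1))
  then have "((\<lambda>x. 1 / \<epsilon> x * (a * \<phi> x)) \<longlongrightarrow> a * L) F"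
    by simp
  from tendsto_scaled_comp_tangent_id[OF DERIV_sin[of 0, simplified] _ a\<phi>_at0 this]
  show ?thesis by simp
qed

lemma tendsto_sin_shift_mult:
  fixes \<epsilon> \<phi> k :: "'a \<Rightarrow> real"
  assumes \<epsilon>: "(\<epsilon> \<longlongrightarrow> 0) F" "eventually (\<lambda>x. \<epsilon> x \<noteq> 0) F"
      and \<phi>: "((\<lambda>x. \<phi> x / \<epsilon> x) \<longlongrightarrow> L) F"
      and k: "((\<lambda>x. \<epsilon> x * k x) \<longlongrightarrow> \<nu>) F"
  shows "((\<lambda>x. sin ((k x + a) * \<phi> x)) \<longlongrightarrow> sin (\<nu> * L)) F"
proof -
  have "((\<lambda>x. \<epsilon> x * k x * (\<phi> x / \<epsilon> x) + a * \<phi> x) \<longlongrightarrow> \<nu> * L + a * 0) F"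
    by (intro tendsto_intros k \<phi> tendsto_zero_if_ratio_tendsto[OF \<epsilon> \<phi>])
  moreover have "eventually (\<lambda>x. \<epsilon> x * k x * (\<phi> x / \<epsilon> x) + a * \<phi> x = (k x + a) * \<phi> x) F"
    using \<epsilon>(2) by eventually_elim (simp add: algebra_simps)
  ultimately have "((\<lambda>x. (k x + a) * \<phi> x) \<longlongrightarrow> \<nu> * L) F"
    by (simp add: tendsto_cong)
  then show ?thesis
    by (auto intro: isCont_tendsto_compose[where g = sin])
qed

lemma tendsto_two_arcsin_div:
  fixes \<epsilon> :: "'a \<Rightarrow> real"
  assumes "(\<epsilon> \<longlongrightarrow> 0) F" "eventually (\<lambda>x. \<epsilon> x > 0) F" "c > 0"
  shows "((\<lambda>x. 2 * arcsin (c * \<epsilon> x) / \<epsilon> x) \<longlongrightarrow> 2 * c) F"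
proof -
  have "((\<lambda>x. c * \<epsilon> x) \<longlongrightarrow> 0) F"
    using tendsto_mult_right_zero[OF assms(1)] by simp
  moreover have "eventually (\<lambda>x. c * \<epsilon> x \<noteq> 0) F"
    using assms(2) by eventually_elim (use assms(3) in simp)
  ultimately have at0: "filterlim (\<lambda>x. c * \<epsilon> x) (at 0) F"
    by (rule filterlim_atI)
  have "eventually (\<lambda>x. 2 / \<epsilon> x * (c * \<epsilon> x) = 2 * c) F"
    using assms(2) by eventually_elim simp
  then have "((\<lambda>x. 2 / \<epsilon> x * (c * \<epsilon> x)) \<longlongrightarrow> 2 * c) F"
    by (simp add: tendsto_eventually)
  from tendsto_scaled_comp_tangent_id[OF DERIV_arcsin[of 0, simplified] _ at0 this]
  show ?thesis by simp
qed

lemma neg_cos_two_arcsin: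
  assumes "\<bar>t\<bar> \<le> 1"
  shows "- cos (2 * arcsin t) = 2 * t\<^sup>2 - 1"
  using assms by (simp add: cos_double_sin)

lemma two_mult_sqrt_half: "2 * sqrt (x / 2) = sqrt (2 * x)"
proof -
  have "sqrt (2 * x) = sqrt (2\<^sup>2 * (x / 2))" by simp
  then show ?thesis unfolding real_sqrt_mult by simp
qed

lemma two_powr_shift_mult_sqrt: "2 powr (\<alpha> - 1/2) * sqrt (2 * x) = 2 powr \<alpha> * sqrt x"
proof -
  have "2 powr (\<alpha> - 1/2) * sqrt 2 = 2 powr (\<alpha> - 1/2) * 2 powr (1/2)"
    by (simp add: powr_half_sqrt)
  also have "\<dots> = 2 powr \<alpha>" by (simp flip: powr_add)
  finally show ?thesis by (simp add: real_sqrt_mult mult.assoc[symmetric])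
qed

lemma Jpoly_scaled_tendsto:
  fixes \<epsilon> :: "'a \<Rightarrow> real" and k :: "'a \<Rightarrow> nat"
  assumes \<alpha>: "\<alpha> \<in> {1/2, -1/2}" and x': "x' > 0"
      and \<epsilon>: "(\<epsilon> \<longlongrightarrow> 0) F" "eventually (\<lambda>x. \<epsilon> x > 0) F"
      and k: "((\<lambda>x. \<epsilon> x * k x) \<longlongrightarrow> \<nu>) F"
  shows "((\<lambda>x. \<epsilon> x * (-1) ^ k x * Jpoly \<alpha> (k x) (\<epsilon> x ^ 2 * x' - 1))
          \<longlongrightarrow> sin (\<nu> * sqrt (2 * x')) / (2 powr \<alpha> * sqrt x')) F"
proof -
  define a where "a = 2 powr (\<alpha> - 1/2)"
  define c where "c = sqrt (x'/2)"
  define \<phi> where "\<phi> x = 2 * arcsin (c * \<epsilon> x)" for x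
  have "a > 0" "c > 0" using x' by (simp_all add: a_def c_def)
  have two_c: "2 * c = sqrt (2 * x')"
    unfolding c_def by (rule two_mult_sqrt_half)
  have a_two_c: "a * sqrt (2 * x') = 2 powr \<alpha> * sqrt x'"
    unfolding a_def by (rule two_powr_shift_mult_sqrt)
  have \<epsilon>_ne: "eventually (\<lambda>x. \<epsilon> x \<noteq> 0) F"
    using \<epsilon>(2) by (auto elim: eventually_mono)
  have c\<epsilon>_small: "eventually (\<lambda>x. 0 < c * \<epsilon> x \<and> c * \<epsilon> x < 1) F"
  proof -
    have "((\<lambda>x. c * \<epsilon> x) \<longlongrightarrow> 0) F" using tendsto_mult_right_zero[OF \<epsilon>(1)] by simp
    then have "eventually (\<lambda>x. c * \<epsilon> x < 1) F" by (rule order_tendstoD) simp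
    with \<epsilon>(2) show ?thesis by eventually_elim (simp add: \<open>c > 0\<close>)
  qed
  have \<phi>_\<epsilon>: "((\<lambda>x. \<phi> x / \<epsilon> x) \<longlongrightarrow> sqrt (2 * x')) F"
    using tendsto_two_arcsin_div[OF \<epsilon> \<open>c > 0\<close>] by (simp add: \<phi>_def two_c)
  have "eventually (\<lambda>x. a * \<phi> x \<noteq> 0) F"
    using c\<epsilon>_small
    by eventually_elim (use \<open>a > 0\<close> in \<open>auto simp: \<phi>_def arcsin_eq_iff[of _ 0, simplified]\<close>)
  from tendsto_sin_div_scale[OF \<epsilon>(1) \<epsilon>_ne \<phi>_\<epsilon> this]
  have denominator: "((\<lambda>x. sin (a * \<phi> x) / \<epsilon> x) \<longlongrightarrow> 2 powr \<alpha> * sqrt x') F"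
    by (simp add: a_two_c)
  have numerator: "((\<lambda>x. sin ((k x + a) * \<phi> x)) \<longlongrightarrow> sin (\<nu> * sqrt (2 * x'))) F"
    using tendsto_sin_shift_mult[OF \<epsilon>(1) \<epsilon>_ne \<phi>_\<epsilon>] k by simp
  have "eventually (\<lambda>x. sin (a * \<phi> x) / \<epsilon> x \<noteq> 0) F"
    by (rule tendsto_imp_eventually_ne[OF denominator]) (use x' in simp)
  with c\<epsilon>_small \<epsilon>_ne
  have "eventually (\<lambda>x. sin ((k x + a) * \<phi> x) / (sin (a * \<phi> x) / \<epsilon> x)
      = \<epsilon> x * (-1) ^ k x * Jpoly \<alpha> (k x) (\<epsilon> x ^ 2 * x' - 1)) F"
  proof eventually_elim
    case (elim x)
    have "- cos (\<phi> x) = \<epsilon> x ^ 2 * x' - 1"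
      using elim x' by (simp add: \<phi>_def c_def neg_cos_two_arcsin power_mult_distrib)
    with Jpoly_neg_cos[OF \<alpha>, of "k x" "\<phi> x"] elim show ?case
      by (simp add: a_def field_simps)
  qed
  with tendsto_divide[OF numerator denominator] x' show ?thesis
    by (simp add: tendsto_cong)
qed

theorem lemma6p3:
  fixes \<alpha> \<nu>1 x' :: real and s :: "nat \<Rightarrow> nat"
  assumes "\<alpha> \<in> {1/2, -1/2}" and "\<nu>1 > 0" and "x' > 0"
    and "(\<lambda>N. real (s N)) \<sim>[at_top] (\<lambda>N. real N powr (1/4) * \<nu>1)"
  shows "((\<lambda>N. real N powr (-1/4) * (-1) ^ (s N)
              * Jpoly \<alpha> (s N) (real N powr (-1/2) * x' - 1))
          \<longlongrightarrow> sin (\<nu>1 * sqrt (2 * x')) / (2 powr \<alpha> * sqrt x')) at_top"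
proof -
  define \<epsilon> where "\<epsilon> N = real N powr (-1/4)" for N :: nat
  have pos: "eventually (\<lambda>N::nat. N > 0) at_top" by (simp add: eventually_gt_at_top)
  have \<epsilon>_0: "(\<epsilon> \<longlongrightarrow> 0) at_top"
    unfolding \<epsilon>_def by (rule tendsto_neg_powr) (simp_all add: filterlim_real_sequentially)
  have \<epsilon>_pos: "eventually (\<lambda>N. \<epsilon> N > 0) at_top"
    using pos by eventually_elim (simp add: \<epsilon>_def)
  have "eventually (\<lambda>N. \<epsilon> N * (real N powr (1/4) * \<nu>1) = \<nu>1) at_top"
    using pos by eventually_elim (simp add: \<epsilon>_def powr_add[symmetric])
  then have "((\<lambda>N. \<epsilon> N * (real N powr (1/4) * \<nu>1)) \<longlongrightarrow> \<nu>1) at_top"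
    by (simp add: tendsto_eventually)
  moreover have "(\<lambda>N. \<epsilon> N * (real N powr (1/4) * \<nu>1)) \<sim>[at_top] (\<lambda>N. \<epsilon> N * real (s N))"
    using assms(4) by (intro asymp_equiv_mult asymp_equiv_refl) (simp add: asymp_equiv_sym)
  ultimately have "((\<lambda>N. \<epsilon> N * real (s N)) \<longlongrightarrow> \<nu>1) at_top"
    by (rule asymp_equiv_tendsto_transfer[rotated])
  note Jpoly_scaled_tendsto[OF assms(1,3) \<epsilon>_0 \<epsilon>_pos this]
  moreover have "eventually (\<lambda>N. \<epsilon> N * (-1) ^ s N * Jpoly \<alpha> (s N) (\<epsilon> N ^ 2 * x' - 1)
      = real N powr (-1/4) * (-1) ^ s N * Jpoly \<alpha> (s N) (real N powr (-1/2) * x' - 1)) at_top"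
    using pos by eventually_elim (simp add: \<epsilon>_def power2_eq_square flip: powr_add)
  ultimately show ?thesis by (rule Lim_transform_eventually)
qed

end
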